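(* Let $\beta>0$, $\bar\mu\in\mathbb{R}^{N\times p}$, $g\in C^3(\mathbb{R})$, and $m=g\circ G_\beta:\mathbb{R}^{N\times p}\to\mathbb{R}$. Then for every $X\in\mathbb{R}^{N\times p}$, $$\sum_{k\in[N],j\in[p]}\Big|\frac{\partial m(X)}{\partial X_{kj}}\Big|\le\|g'\|_\infty,$$ $$\sum_{k_1,k_2\in[N],\,j_1,j_2\in[p]}\Big|\frac{\partial^2m(X)}{\partial X_{k_1j_1}\partial X_{k_2j_2}}\Big|\le\|g''\|_\infty+4\beta\|g'\|_\infty,$$ $$\sum_{k_1,k_2,k_3\in[N],\,j_1,j_2,j_3\in[p]}\Big|\frac{\partial^3m(X)}{\partial X_{k_1j_1}\partial X_{k_2j_2}\partial X_{k_3j_3}}\Big|\le\|g'''\|_\infty+16\beta\|g''\|_\infty+24\beta^2\|g'\|_\infty.$$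
   Context: For $k\in[N]$ and $v\in\mathbb{R}^p$, $F_{\beta,\bar\mu_k}(v)=\beta^{-1}\log\big(\sum_{j=1}^p\exp(\beta\{v_j+\bar\mu_{kj}\})\big)$; for $X\in\mathbb{R}^{N\times p}$ with rows $X_{1\cdot},\dots,X_{N\cdot}$, $F_{\beta,\bar\mu}(X)=(F_{\beta,\bar\mu_1}(X_{1\cdot}),\dots,F_{\beta,\bar\mu_N}(X_{N\cdot}))'\in\mathbb{R}^N$; for $u\in\mathbb{R}^N$, $F_{\beta,0}(u)=\beta^{-1}\log\sum_{k=1}^N\exp(\beta u_k)$; and $G_\beta(X)=-F_{\beta,0}(-F_{\beta,\bar\mu}(X))$. $\|g^{(r)}\|_\infty=\sup_{t\in\mathbb{R}}|g^{(r)}(t)|$. *)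

theory Defs
  imports "HOL-Analysis.Analysis" "HOL-Library.Extended_Real"
begin

text \<open>Matrices in R^{N x p} are rendered as real^'p^'n, row k is X$k, entry X_{kj} is X$k$j.\<close>

definition Fk :: "real \<Rightarrow> real^'p \<Rightarrow> real^'p \<Rightarrow> real" where
  "Fk \<beta> muk v = ln (\<Sum>j\<in>UNIV. exp (\<beta> * (v$j + muk$j))) / \<beta>"

definition Fvec :: "real \<Rightarrow> real^'p^'n \<Rightarrow> real^'p^'n \<Rightarrow> real^'n" where
  "Fvec \<beta> mu X = (\<chi> k. Fk \<beta> (mu$k) (X$k))"

definition F0 :: "real \<Rightarrow> real^'n \<Rightarrow> real" where
  "F0 \<beta> u = ln (\<Sum>k\<in>UNIV. exp (\<beta> * u$k)) / \<beta>"

definition Gbeta :: "real \<Rightarrow> real^'p^'n \<Rightarrow> real^'p^'n \<Rightarrow> real" where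
  "Gbeta \<beta> mu X = - F0 \<beta> (- Fvec \<beta> mu X)"

definition Emat :: "'n \<Rightarrow> 'p \<Rightarrow> real^'p^'n" where
  "Emat k j = (\<chi> a b. if a = k \<and> b = j then 1 else 0)"

definition pd :: "(real^'p^'n \<Rightarrow> real) \<Rightarrow> 'n \<Rightarrow> 'p \<Rightarrow> real^'p^'n \<Rightarrow> real" where
  "pd f k j X = deriv (\<lambda>t. f (X + t *\<^sub>R Emat k j)) 0"

definition supnorm :: "(real \<Rightarrow> real) \<Rightarrow> ereal" where
  "supnorm h = (SUP t. ereal \<bar>h t\<bar>)"

end

theory Submission
  imports Defs
begin

text \<open>
  Write p_kj for the soft-max weights of row k (the gradient of F_{beta,mu_k}; row_softmax below)
  and q_k for the soft-min weights over the rows (the gradient of F_{beta,0} at -F_{beta,mu}(X);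
  row_softmin below). By the chain rule dG_beta/dX_kj = w_kj := q_k p_kj (Gbeta_grad), and w is a
  probability vector. Differentiating w_i in the direction i' gives
  beta w_i (delta_ii' - 2 [same row] p_i' + w_i'), whose absolute values sum over i' to at most
  4 beta w_i; one more differentiation gives a total of at most 24 beta^2 w_i. Expanding the
  derivatives of g o G_beta by the chain rule and summing these weighted bounds against the
  probability vector w yields the three estimates, the third even with 12 beta in place of 16 beta.
\<close>

section \<open>Partial derivatives along matrix entries\<close>

definition has_partial_deriv ::
    "(real^'p::finite^'n::finite \<Rightarrow> real) \<Rightarrow> 'n \<times> 'p \<Rightarrow> (real^'p^'n \<Rightarrow> real) \<Rightarrow> bool" where
  "has_partial_deriv f i f' \<longleftrightarrow>
     (\<forall>Y. ((\<lambda>t. f (Y + t *\<^sub>R Emat (fst i) (snd i))) has_real_derivative f' Y) (at 0))"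

lemma pd_eq_partial_deriv: "has_partial_deriv f (k, j) f' \<Longrightarrow> pd f k j = f'"
  unfolding has_partial_deriv_def pd_def by (auto intro: DERIV_imp_deriv)

lemma entry_add_scaleR_Emat:
  "(Y + t *\<^sub>R Emat k j) $ a $ b = Y $ a $ b + t * of_bool (a = k \<and> b = j)"
  by (simp add: Emat_def)

lemma has_partial_deriv_entry:
  "has_partial_deriv (\<lambda>Y. Y $ fst i' $ snd i') i (\<lambda>Y. of_bool (i' = i))"
  unfolding has_partial_deriv_def entry_add_scaleR_Emat
  by (cases i; cases i') (auto intro!: derivative_eq_intros)

lemma has_partial_deriv_const: "has_partial_deriv (\<lambda>Y. c) i (\<lambda>Y. 0)"
  unfolding has_partial_deriv_def by simp

lemma has_partial_deriv_add:
  "has_partial_deriv f i f' \<Longrightarrow> has_partial_deriv h i h' \<Longrightarrow>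
   has_partial_deriv (\<lambda>Y. f Y + h Y) i (\<lambda>Y. f' Y + h' Y)"
  unfolding has_partial_deriv_def by (auto intro!: derivative_eq_intros)

lemma has_partial_deriv_diff:
  "has_partial_deriv f i f' \<Longrightarrow> has_partial_deriv h i h' \<Longrightarrow>
   has_partial_deriv (\<lambda>Y. f Y - h Y) i (\<lambda>Y. f' Y - h' Y)"
  unfolding has_partial_deriv_def by (auto intro!: derivative_eq_intros)

lemma has_partial_deriv_mult:
  "has_partial_deriv f i f' \<Longrightarrow> has_partial_deriv h i h' \<Longrightarrow>
   has_partial_deriv (\<lambda>Y. f Y * h Y) i (\<lambda>Y. f' Y * h Y + f Y * h' Y)"
  unfolding has_partial_deriv_def by (auto intro!: derivative_eq_intros)

lemma has_partial_deriv_sum: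
  "(\<And>x. x \<in> A \<Longrightarrow> has_partial_deriv (f x) i (f' x)) \<Longrightarrow>
   has_partial_deriv (\<lambda>Y. \<Sum>x\<in>A. f x Y) i (\<lambda>Y. \<Sum>x\<in>A. f' x Y)"
  unfolding has_partial_deriv_def by (auto intro!: derivative_eq_intros)

lemma has_partial_deriv_chain:
  assumes "\<And>x. (f has_real_derivative f' x) (at x)" and "has_partial_deriv h i h'"
  shows "has_partial_deriv (\<lambda>Y. f (h Y)) i (\<lambda>Y. f' (h Y) * h' Y)"
  using assms unfolding has_partial_deriv_def
  by (auto intro!: DERIV_chain2[where f=f and g="\<lambda>t. h (_ + t *\<^sub>R _)", simplified])

lemma has_partial_deriv_exp:
  "has_partial_deriv h i h' \<Longrightarrow> has_partial_deriv (\<lambda>Y. exp (h Y)) i (\<lambda>Y. exp (h Y) * h' Y)"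
  by (rule has_partial_deriv_chain[OF DERIV_exp])

lemma has_partial_deriv_ln:
  "(\<And>Y. h Y > 0) \<Longrightarrow> has_partial_deriv h i h' \<Longrightarrow>
   has_partial_deriv (\<lambda>Y. ln (h Y)) i (\<lambda>Y. h' Y / h Y)"
  unfolding has_partial_deriv_def by (auto intro!: derivative_eq_intros)

lemma has_partial_deriv_divide:
  "(\<And>Y. h Y \<noteq> 0) \<Longrightarrow> has_partial_deriv f i f' \<Longrightarrow> has_partial_deriv h i h' \<Longrightarrow>
   has_partial_deriv (\<lambda>Y. f Y / h Y) i (\<lambda>Y. (f' Y * h Y - f Y * h' Y) / (h Y)\<^sup>2)"
  unfolding has_partial_deriv_def by (auto intro!: derivative_eq_intros simp: power2_eq_square)

lemma has_partial_deriv_cong: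
  "has_partial_deriv f i f' \<Longrightarrow> (\<And>Y. f' Y = f'' Y) \<Longrightarrow> has_partial_deriv f i f''"
  unfolding has_partial_deriv_def by simp

section \<open>Derivative sums of a composition\<close>

lemma partial_derivs_of_composition:
  fixes G :: "real^'p::finite^'n::finite \<Rightarrow> real"
  assumes g1: "\<And>t. (g has_real_derivative g1 t) (at t)"
    and g2: "\<And>t. (g1 has_real_derivative g2 t) (at t)"
    and g3: "\<And>t. (g2 has_real_derivative g3 t) (at t)"
    and dG: "\<And>i. has_partial_deriv G i (w i)"
    and dw: "\<And>i i'. has_partial_deriv (w i) i' (w' i i')"
    and dw': "\<And>i i' i''. has_partial_deriv (w' i i') i'' (w'' i i' i'')"
  defines "m \<equiv> \<lambda>Y. g (G Y)"
  shows "pd m k j = (\<lambda>Y. g1 (G Y) * w (k, j) Y)"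
    and "pd (pd m k2 j2) k1 j1 =
           (\<lambda>Y. g2 (G Y) * w (k1, j1) Y * w (k2, j2) Y + g1 (G Y) * w' (k2, j2) (k1, j1) Y)"
    and "pd (pd (pd m k3 j3) k2 j2) k1 j1 =
           (\<lambda>Y. g3 (G Y) * w (k1, j1) Y * w (k2, j2) Y * w (k3, j3) Y
              + g2 (G Y) * (w' (k2, j2) (k1, j1) Y * w (k3, j3) Y + w (k2, j2) Y * w' (k3, j3) (k1, j1) Y
                             + w (k1, j1) Y * w' (k3, j3) (k2, j2) Y)
              + g1 (G Y) * w'' (k3, j3) (k2, j2) (k1, j1) Y)"
proof -
  have d1: "has_partial_deriv m i (\<lambda>Y. g1 (G Y) * w i Y)" for i
    unfolding m_def by (rule has_partial_deriv_chain[OF g1 dG])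
  have d2: "has_partial_deriv (\<lambda>Y. g1 (G Y) * w i Y) i'
              (\<lambda>Y. g2 (G Y) * w i' Y * w i Y + g1 (G Y) * w' i i' Y)" for i i'
    by (rule has_partial_deriv_cong, (rule has_partial_deriv_mult has_partial_deriv_chain[OF g2] dG dw)+)
      (simp add: algebra_simps)
  have d3: "has_partial_deriv (\<lambda>Y. g2 (G Y) * w i' Y * w i Y + g1 (G Y) * w' i i' Y) i''
              (\<lambda>Y. g3 (G Y) * w i'' Y * w i' Y * w i Y
                 + g2 (G Y) * (w' i' i'' Y * w i Y + w i' Y * w' i i'' Y + w i'' Y * w' i i' Y)
                 + g1 (G Y) * w'' i i' i'' Y)" for i i' i''
    by (rule has_partial_deriv_cong,
        (rule has_partial_deriv_add has_partial_deriv_mult has_partial_deriv_chain[OF g2]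
          has_partial_deriv_chain[OF g3] dG dw dw')+)
      (simp add: algebra_simps)
  show "pd m k j = (\<lambda>Y. g1 (G Y) * w (k, j) Y)"
    by (rule pd_eq_partial_deriv[OF d1])
  show "pd (pd m k2 j2) k1 j1 =
           (\<lambda>Y. g2 (G Y) * w (k1, j1) Y * w (k2, j2) Y + g1 (G Y) * w' (k2, j2) (k1, j1) Y)"
    unfolding pd_eq_partial_deriv[OF d1] by (rule pd_eq_partial_deriv[OF d2])
  show "pd (pd (pd m k3 j3) k2 j2) k1 j1 = (\<lambda>Y. g3 (G Y) * w (k1, j1) Y * w (k2, j2) Y * w (k3, j3) Y
              + g2 (G Y) * (w' (k2, j2) (k1, j1) Y * w (k3, j3) Y + w (k2, j2) Y * w' (k3, j3) (k1, j1) Y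
                             + w (k1, j1) Y * w' (k3, j3) (k2, j2) Y)
              + g1 (G Y) * w'' (k3, j3) (k2, j2) (k1, j1) Y)"
    unfolding pd_eq_partial_deriv[OF d1] pd_eq_partial_deriv[OF d2]
    by (rule pd_eq_partial_deriv[OF has_partial_deriv_cong[OF d3]]) (simp add: algebra_simps)
qed

lemma sum_UNIV_pair: "(\<Sum>i\<in>UNIV. h i) = (\<Sum>k\<in>UNIV. \<Sum>j\<in>UNIV. (h (k, j) :: 'a::comm_monoid_add))"
  by (simp add: sum.cartesian_product UNIV_Times_UNIV[symmetric] del: UNIV_Times_UNIV)

lemma sum_regroup_pairs2:
  fixes f :: "'a::finite \<Rightarrow> 'b::finite \<Rightarrow> 'a \<Rightarrow> 'b \<Rightarrow> 'c::comm_monoid_add"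
  shows "(\<Sum>k1\<in>UNIV. \<Sum>k2\<in>UNIV. \<Sum>j1\<in>UNIV. \<Sum>j2\<in>UNIV. f k1 j1 k2 j2)
       = (\<Sum>i1\<in>UNIV. \<Sum>i2\<in>UNIV. f (fst i1) (snd i1) (fst i2) (snd i2))"
  unfolding sum_UNIV_pair prod.sel by (rule sum.cong[OF refl], rule sum.swap)

lemma sum_regroup_pairs3:
  fixes f :: "'a::finite \<Rightarrow> 'b::finite \<Rightarrow> 'a \<Rightarrow> 'b \<Rightarrow> 'a \<Rightarrow> 'b \<Rightarrow> 'c::comm_monoid_add"
  shows "(\<Sum>k1\<in>UNIV. \<Sum>k2\<in>UNIV. \<Sum>k3\<in>UNIV. \<Sum>j1\<in>UNIV. \<Sum>j2\<in>UNIV. \<Sum>j3\<in>UNIV. f k1 j1 k2 j2 k3 j3)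
     = (\<Sum>i1\<in>UNIV. \<Sum>i2\<in>UNIV. \<Sum>i3\<in>UNIV. f (fst i1) (snd i1) (fst i2) (snd i2) (fst i3) (snd i3))"
proof -
  have "(\<Sum>k2\<in>UNIV. \<Sum>k3\<in>UNIV. \<Sum>j1\<in>UNIV. \<Sum>j2\<in>UNIV. \<Sum>j3\<in>UNIV. f k1 j1 k2 j2 k3 j3)
      = (\<Sum>j1\<in>UNIV. \<Sum>k2\<in>UNIV. \<Sum>j2\<in>UNIV. \<Sum>k3\<in>UNIV. \<Sum>j3\<in>UNIV. f k1 j1 k2 j2 k3 j3)" for k1
    by (subst sum.swap, rule sum.cong[OF refl], subst sum.swap, rule sum.cong[OF refl], rule sum.swap)
  then show ?thesis
    by (simp add: sum_UNIV_pair)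
qed

lemma sum_le_if_le_weights:
  fixes w :: "'i::finite \<Rightarrow> real"
  assumes "(\<Sum>i\<in>UNIV. w i) = 1" and "\<And>i. f i \<le> c * w i"
  shows "(\<Sum>i\<in>UNIV. f i) \<le> c"
  using sum_mono[of UNIV f "\<lambda>i. c * w i"] assms by (simp add: sum_distrib_left[symmetric])

lemma sum_abs_second_order_chain_le:
  fixes w :: "'i::finite \<Rightarrow> real" and w' :: "'i \<Rightarrow> 'i \<Rightarrow> real"
  assumes w_nonneg: "\<And>i. 0 \<le> w i" and w_sum: "(\<Sum>i\<in>UNIV. w i) = 1"
    and w'_le: "\<And>i. (\<Sum>i'\<in>UNIV. \<bar>w' i i'\<bar>) \<le> c1 * w i"
  shows "(\<Sum>i1\<in>UNIV. \<Sum>i2\<in>UNIV. \<bar>a2 * w i1 * w i2 + a1 * w' i2 i1\<bar>) \<le> \<bar>a2\<bar> + c1 * \<bar>a1\<bar>"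
proof -
  have "(\<Sum>i1\<in>UNIV. \<Sum>i2\<in>UNIV. \<bar>a2 * w i1 * w i2 + a1 * w' i2 i1\<bar>)
      \<le> (\<Sum>i1\<in>UNIV. \<Sum>i2\<in>UNIV. \<bar>a2\<bar> * w i1 * w i2 + \<bar>a1\<bar> * \<bar>w' i2 i1\<bar>)"
    by (intro sum_mono order.trans[OF abs_triangle_ineq]) (simp add: abs_mult w_nonneg)
  also have "\<dots> = \<bar>a2\<bar> + \<bar>a1\<bar> * (\<Sum>i2\<in>UNIV. \<Sum>i1\<in>UNIV. \<bar>w' i2 i1\<bar>)"
    by (simp add: sum.distrib sum_distrib_left[symmetric] sum_distrib_right[symmetric] w_sum
        sum.swap[of "\<lambda>i1 i2. \<bar>w' i2 i1\<bar>"])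
  also have "\<dots> \<le> \<bar>a2\<bar> + c1 * \<bar>a1\<bar>"
    using mult_left_mono[OF sum_le_if_le_weights[OF w_sum w'_le], of "\<bar>a1\<bar>"] by (simp add: mult.commute)
  finally show ?thesis .
qed

lemma sum_abs_third_order_chain_le:
  fixes w :: "'i::finite \<Rightarrow> real" and w' :: "'i \<Rightarrow> 'i \<Rightarrow> real" and w'' :: "'i \<Rightarrow> 'i \<Rightarrow> 'i \<Rightarrow> real"
  assumes w_nonneg: "\<And>i. 0 \<le> w i" and w_sum: "(\<Sum>i\<in>UNIV. w i) = 1"
    and w'_le: "\<And>i. (\<Sum>i'\<in>UNIV. \<bar>w' i i'\<bar>) \<le> c1 * w i"
    and w''_le: "\<And>i. (\<Sum>i'\<in>UNIV. \<Sum>i''\<in>UNIV. \<bar>w'' i i' i''\<bar>) \<le> c2 * w i"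
  shows "(\<Sum>i1\<in>UNIV. \<Sum>i2\<in>UNIV. \<Sum>i3\<in>UNIV.
            \<bar>a3 * w i1 * w i2 * w i3 + a2 * (w' i2 i1 * w i3 + w i2 * w' i3 i1 + w i1 * w' i3 i2)
             + a1 * w'' i3 i2 i1\<bar>)
         \<le> \<bar>a3\<bar> + 3 * c1 * \<bar>a2\<bar> + c2 * \<bar>a1\<bar>"
proof -
  have W': "(\<Sum>i\<in>UNIV. \<Sum>i'\<in>UNIV. \<bar>w' i i'\<bar>) \<le> c1"
    by (rule sum_le_if_le_weights[OF w_sum w'_le])
  have W'': "(\<Sum>i\<in>UNIV. \<Sum>i'\<in>UNIV. \<Sum>i''\<in>UNIV. \<bar>w'' i i' i''\<bar>) \<le> c2"
    by (rule sum_le_if_le_weights[OF w_sum w''_le])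
  have "(\<Sum>i1\<in>UNIV. \<Sum>i2\<in>UNIV. \<Sum>i3\<in>UNIV.
            \<bar>a3 * w i1 * w i2 * w i3 + a2 * (w' i2 i1 * w i3 + w i2 * w' i3 i1 + w i1 * w' i3 i2)
             + a1 * w'' i3 i2 i1\<bar>)
      \<le> (\<Sum>i1\<in>UNIV. \<Sum>i2\<in>UNIV. \<Sum>i3\<in>UNIV.
            \<bar>a3\<bar> * (w i1 * w i2 * w i3)
            + \<bar>a2\<bar> * (\<bar>w' i2 i1\<bar> * w i3 + w i2 * \<bar>w' i3 i1\<bar> + w i1 * \<bar>w' i3 i2\<bar>)
            + \<bar>a1\<bar> * \<bar>w'' i3 i2 i1\<bar>)"
  proof (intro sum_mono)
    fix i1 i2 i3
    show "\<bar>a3 * w i1 * w i2 * w i3 + a2 * (w' i2 i1 * w i3 + w i2 * w' i3 i1 + w i1 * w' i3 i2)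
             + a1 * w'' i3 i2 i1\<bar>
        \<le> \<bar>a3\<bar> * (w i1 * w i2 * w i3)
            + \<bar>a2\<bar> * (\<bar>w' i2 i1\<bar> * w i3 + w i2 * \<bar>w' i3 i1\<bar> + w i1 * \<bar>w' i3 i2\<bar>)
            + \<bar>a1\<bar> * \<bar>w'' i3 i2 i1\<bar>"
      using w_nonneg[of i1] w_nonneg[of i2] w_nonneg[of i3]
      by (simp add: abs_mult abs_triangle_ineq order.trans[OF abs_triangle_ineq] add_mono mult_left_mono)
  qed
  also have "\<dots> = \<bar>a3\<bar> + \<bar>a2\<bar> * (3 * (\<Sum>i\<in>UNIV. \<Sum>i'\<in>UNIV. \<bar>w' i i'\<bar>))
      + \<bar>a1\<bar> * (\<Sum>i\<in>UNIV. \<Sum>i'\<in>UNIV. \<Sum>i''\<in>UNIV. \<bar>w'' i i' i''\<bar>)"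
  proof -
    have swap_w': "(\<Sum>i1\<in>UNIV. \<Sum>i2\<in>UNIV. \<bar>w' i2 i1\<bar>) = (\<Sum>i\<in>UNIV. \<Sum>i'\<in>UNIV. \<bar>w' i i'\<bar>)"
      by (rule sum.swap)
    have "(\<Sum>i1\<in>UNIV. \<Sum>i2\<in>UNIV. \<Sum>i3\<in>UNIV. w i1 * w i2 * w i3) = 1"
      by (simp add: sum_distrib_left[symmetric] sum_distrib_right[symmetric] w_sum)
    moreover have "(\<Sum>i1\<in>UNIV. \<Sum>i2\<in>UNIV. \<Sum>i3\<in>UNIV. \<bar>w' i2 i1\<bar> * w i3) = (\<Sum>i\<in>UNIV. \<Sum>i'\<in>UNIV. \<bar>w' i i'\<bar>)"
      by (simp add: sum_distrib_left[symmetric] w_sum swap_w')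
    moreover have "(\<Sum>i1\<in>UNIV. \<Sum>i2\<in>UNIV. \<Sum>i3\<in>UNIV. w i2 * \<bar>w' i3 i1\<bar>) = (\<Sum>i\<in>UNIV. \<Sum>i'\<in>UNIV. \<bar>w' i i'\<bar>)"
      by (simp add: sum_distrib_left[symmetric] sum_distrib_right[symmetric] w_sum swap_w')
    moreover have "(\<Sum>i1\<in>UNIV. \<Sum>i2\<in>UNIV. \<Sum>i3\<in>UNIV. w i1 * \<bar>w' i3 i2\<bar>) = (\<Sum>i\<in>UNIV. \<Sum>i'\<in>UNIV. \<bar>w' i i'\<bar>)"
      by (simp add: sum_distrib_left[symmetric] sum_distrib_right[symmetric] w_sum swap_w')
    moreover have "(\<Sum>i1\<in>UNIV. \<Sum>i2\<in>UNIV. \<Sum>i3\<in>UNIV. \<bar>w'' i3 i2 i1\<bar>)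
        = (\<Sum>i\<in>UNIV. \<Sum>i'\<in>UNIV. \<Sum>i''\<in>UNIV. \<bar>w'' i i' i''\<bar>)"
      by (subst sum.swap, subst (1 2) sum.swap) (rule refl)
    ultimately show ?thesis
      by (simp add: sum.distrib sum_distrib_left[symmetric] algebra_simps)
  qed
  also have "\<dots> \<le> \<bar>a3\<bar> + 3 * c1 * \<bar>a2\<bar> + c2 * \<bar>a1\<bar>"
    using mult_left_mono[OF W', of "3 * \<bar>a2\<bar>"] mult_left_mono[OF W'', of "\<bar>a1\<bar>"]
    by (simp add: algebra_simps)
  finally show ?thesis .
qed

section \<open>Soft-min of row-wise soft-max\<close>

definition boltzmann :: "real \<Rightarrow> real^'p::finite^'n::finite \<Rightarrow> 'n \<times> 'p \<Rightarrow> real^'p^'n \<Rightarrow> real" where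
  "boltzmann \<beta> mu i Y = exp (\<beta> * (Y $ fst i $ snd i + mu $ fst i $ snd i))"

definition row_partition :: "real \<Rightarrow> real^'p::finite^'n::finite \<Rightarrow> 'n \<Rightarrow> real^'p^'n \<Rightarrow> real" where
  "row_partition \<beta> mu k Y = (\<Sum>j\<in>UNIV. boltzmann \<beta> mu (k, j) Y)"

definition row_softmax :: "real \<Rightarrow> real^'p::finite^'n::finite \<Rightarrow> 'n \<times> 'p \<Rightarrow> real^'p^'n \<Rightarrow> real" where
  "row_softmax \<beta> mu i Y = boltzmann \<beta> mu i Y / row_partition \<beta> mu (fst i) Y"

definition total_partition :: "real \<Rightarrow> real^'p::finite^'n::finite \<Rightarrow> real^'p^'n \<Rightarrow> real" where
  "total_partition \<beta> mu Y = (\<Sum>k\<in>UNIV. 1 / row_partition \<beta> mu k Y)"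

definition row_softmin :: "real \<Rightarrow> real^'p::finite^'n::finite \<Rightarrow> 'n \<Rightarrow> real^'p^'n \<Rightarrow> real" where
  "row_softmin \<beta> mu k Y = 1 / (row_partition \<beta> mu k Y * total_partition \<beta> mu Y)"

definition Gbeta_grad :: "real \<Rightarrow> real^'p::finite^'n::finite \<Rightarrow> 'n \<times> 'p \<Rightarrow> real^'p^'n \<Rightarrow> real" where
  "Gbeta_grad \<beta> mu i Y = row_softmin \<beta> mu (fst i) Y * row_softmax \<beta> mu i Y"

lemma boltzmann_pos: "0 < boltzmann \<beta> mu i Y"
  by (simp add: boltzmann_def)

lemma row_partition_pos: "0 < row_partition \<beta> mu k Y"
  unfolding row_partition_def by (intro sum_pos) (auto simp: boltzmann_pos)

lemma total_partition_pos: "0 < total_partition \<beta> mu Y"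
  unfolding total_partition_def by (intro sum_pos) (auto simp: row_partition_pos)

lemmas partitions_nonzero =
  row_partition_pos[THEN dual_order.strict_implies_not_eq]
  total_partition_pos[THEN dual_order.strict_implies_not_eq]

lemma row_softmax_pos: "0 < row_softmax \<beta> mu i Y"
  by (simp add: row_softmax_def boltzmann_pos row_partition_pos)

lemma row_softmin_pos: "0 < row_softmin \<beta> mu k Y"
  by (simp add: row_softmin_def row_partition_pos total_partition_pos)

lemma Gbeta_grad_pos: "0 < Gbeta_grad \<beta> mu i Y"
  by (simp add: Gbeta_grad_def row_softmax_pos row_softmin_pos)

lemma sum_row_softmax: "(\<Sum>j\<in>UNIV. row_softmax \<beta> mu (k, j) Y) = 1"
  using row_partition_pos[of \<beta> mu k Y]
  by (simp add: row_softmax_def sum_divide_distrib[symmetric] row_partition_def)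

lemma sum_same_row_softmax:
  "(\<Sum>i'\<in>UNIV. of_bool (fst i = fst i') * row_softmax \<beta> mu i' Y) = 1"
  by (simp add: sum_UNIV_pair[where h = "\<lambda>i'. of_bool (fst i = fst i') * _ i'"]
      sum_distrib_left[symmetric] sum_row_softmax)

lemma sum_row_softmin: "(\<Sum>k\<in>UNIV. row_softmin \<beta> mu k Y) = 1"
  using total_partition_pos[of \<beta> mu Y]
  by (simp add: row_softmin_def total_partition_def sum_divide_distrib[symmetric] flip: divide_divide_eq_left)

lemma sum_Gbeta_grad: "(\<Sum>i\<in>UNIV. Gbeta_grad \<beta> mu i Y) = 1"
  by (simp add: Gbeta_grad_def sum_UNIV_pair[where h = "\<lambda>i. row_softmin \<beta> mu (fst i) Y * _ i"]
      sum_distrib_left[symmetric] sum_row_softmax sum_row_softmin)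

lemma Gbeta_eq_ln_total_partition:
  assumes "\<beta> \<noteq> 0" shows "Gbeta \<beta> mu Y = - ln (total_partition \<beta> mu Y) / \<beta>"
proof -
  have "exp (\<beta> * - Fk \<beta> (mu $ k) (Y $ k)) = 1 / row_partition \<beta> mu k Y" for k
    using assms row_partition_pos[of \<beta> mu k Y]
    by (simp add: Fk_def row_partition_def boltzmann_def exp_minus inverse_eq_divide)
  then show ?thesis
    by (simp add: Gbeta_def F0_def Fvec_def total_partition_def)
qed

definition row_softmax_deriv ::
    "real \<Rightarrow> real^'p::finite^'n::finite \<Rightarrow> 'n \<times> 'p \<Rightarrow> 'n \<times> 'p \<Rightarrow> real^'p^'n \<Rightarrow> real" where
  "row_softmax_deriv \<beta> mu i i' Y =
     \<beta> * row_softmax \<beta> mu i Y * (of_bool (i = i') - of_bool (fst i = fst i') * row_softmax \<beta> mu i' Y)"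

definition Gbeta_hess_factor ::
    "real \<Rightarrow> real^'p::finite^'n::finite \<Rightarrow> 'n \<times> 'p \<Rightarrow> 'n \<times> 'p \<Rightarrow> real^'p^'n \<Rightarrow> real" where
  "Gbeta_hess_factor \<beta> mu i i' Y =
     of_bool (i = i') - 2 * of_bool (fst i = fst i') * row_softmax \<beta> mu i' Y + Gbeta_grad \<beta> mu i' Y"

definition Gbeta_hess ::
    "real \<Rightarrow> real^'p::finite^'n::finite \<Rightarrow> 'n \<times> 'p \<Rightarrow> 'n \<times> 'p \<Rightarrow> real^'p^'n \<Rightarrow> real" where
  "Gbeta_hess \<beta> mu i i' Y = \<beta> * Gbeta_grad \<beta> mu i Y * Gbeta_hess_factor \<beta> mu i i' Y"

definition Gbeta_d3 ::
    "real \<Rightarrow> real^'p::finite^'n::finite \<Rightarrow> 'n \<times> 'p \<Rightarrow> 'n \<times> 'p \<Rightarrow> 'n \<times> 'p \<Rightarrow> real^'p^'n \<Rightarrow> real" where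
  "Gbeta_d3 \<beta> mu i i' i'' Y =
     \<beta> * (Gbeta_hess \<beta> mu i i'' Y * Gbeta_hess_factor \<beta> mu i i' Y
       + Gbeta_grad \<beta> mu i Y * (Gbeta_hess \<beta> mu i' i'' Y
                                 - 2 * of_bool (fst i = fst i') * row_softmax_deriv \<beta> mu i' i'' Y))"

lemma has_partial_deriv_boltzmann:
  "has_partial_deriv (boltzmann \<beta> mu i) i' (\<lambda>Y. \<beta> * of_bool (i = i') * boltzmann \<beta> mu i Y)"
  unfolding boltzmann_def
  by (rule has_partial_deriv_cong, (rule has_partial_deriv_exp has_partial_deriv_mult
        has_partial_deriv_add has_partial_deriv_const has_partial_deriv_entry)+) auto

lemma has_partial_deriv_row_partition:
  "has_partial_deriv (row_partition \<beta> mu k) i'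
     (\<lambda>Y. \<beta> * of_bool (fst i' = k) * boltzmann \<beta> mu i' Y)"
  unfolding row_partition_def
  by (rule has_partial_deriv_cong, rule has_partial_deriv_sum, rule has_partial_deriv_boltzmann)
    (cases i', auto simp: mult.assoc sum_distrib_left[symmetric])

lemma has_partial_deriv_row_softmax:
  "has_partial_deriv (row_softmax \<beta> mu i) i' (row_softmax_deriv \<beta> mu i i')"
  unfolding row_softmax_def[abs_def]
  by (rule has_partial_deriv_cong, rule has_partial_deriv_divide[OF _ has_partial_deriv_boltzmann
        has_partial_deriv_row_partition])
    (auto simp: row_softmax_deriv_def row_softmax_def field_simps power2_eq_square
      partitions_nonzero)

lemma has_partial_deriv_inverse_row_partition:
  "has_partial_deriv (\<lambda>Y. 1 / row_partition \<beta> mu k Y) i'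
     (\<lambda>Y. of_bool (fst i' = k) * (- \<beta> * row_softmax \<beta> mu i' Y / row_partition \<beta> mu k Y))"
  by (rule has_partial_deriv_cong, rule has_partial_deriv_divide[OF _
        has_partial_deriv_const has_partial_deriv_row_partition])
    (auto simp: row_softmax_def power2_eq_square partitions_nonzero)

lemma has_partial_deriv_total_partition:
  "has_partial_deriv (total_partition \<beta> mu) i'
     (\<lambda>Y. - \<beta> * row_softmax \<beta> mu i' Y / row_partition \<beta> mu (fst i') Y)"
  unfolding total_partition_def[abs_def]
  by (rule has_partial_deriv_cong, rule has_partial_deriv_sum,
      rule has_partial_deriv_inverse_row_partition)
    (simp only: sum_of_bool_mult_eq[OF finite_class.finite_UNIV], simp)

lemma has_partial_deriv_row_softmin:
  "has_partial_deriv (row_softmin \<beta> mu k) i'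
     (\<lambda>Y. \<beta> * row_softmin \<beta> mu k Y
            * (Gbeta_grad \<beta> mu i' Y - of_bool (fst i' = k) * row_softmax \<beta> mu i' Y))"
  unfolding row_softmin_def[abs_def]
  by (rule has_partial_deriv_cong, rule has_partial_deriv_divide[OF _ has_partial_deriv_const
        has_partial_deriv_mult[OF has_partial_deriv_row_partition has_partial_deriv_total_partition]])
    (auto simp: Gbeta_grad_def row_softmin_def row_softmax_def partitions_nonzero field_simps power2_eq_square)

lemma has_partial_deriv_Gbeta:
  assumes "\<beta> \<noteq> 0"
  shows "has_partial_deriv (Gbeta \<beta> mu) i' (Gbeta_grad \<beta> mu i')"
proof -
  have G_eq: "Gbeta \<beta> mu = (\<lambda>Y. (- 1 / \<beta>) * ln (total_partition \<beta> mu Y))"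
    using assms by (simp add: Gbeta_eq_ln_total_partition fun_eq_iff)
  show ?thesis
    unfolding G_eq by (rule has_partial_deriv_cong, rule has_partial_deriv_mult[OF has_partial_deriv_const
          has_partial_deriv_ln[OF total_partition_pos has_partial_deriv_total_partition]])
      (use assms in \<open>auto simp: Gbeta_grad_def row_softmin_def partitions_nonzero field_simps\<close>)
qed

lemma has_partial_deriv_Gbeta_grad:
  "has_partial_deriv (Gbeta_grad \<beta> mu i) i' (Gbeta_hess \<beta> mu i i')"
  unfolding Gbeta_grad_def[abs_def]
  by (rule has_partial_deriv_cong, rule has_partial_deriv_mult[OF has_partial_deriv_row_softmin
        has_partial_deriv_row_softmax])
    (cases "fst i = fst i'"; auto simp: Gbeta_hess_def Gbeta_hess_factor_def row_softmax_deriv_def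
      Gbeta_grad_def algebra_simps)

lemma has_partial_deriv_Gbeta_hess:
  "has_partial_deriv (Gbeta_hess \<beta> mu i i') i'' (Gbeta_d3 \<beta> mu i i' i'')"
  unfolding Gbeta_hess_def[abs_def] Gbeta_hess_factor_def
  by (rule has_partial_deriv_cong, (rule has_partial_deriv_mult has_partial_deriv_add
        has_partial_deriv_diff has_partial_deriv_const has_partial_deriv_Gbeta_grad
        has_partial_deriv_row_softmax)+)
    (simp add: Gbeta_d3_def Gbeta_hess_factor_def algebra_simps)

lemma sum_abs_Gbeta_hess_factor_le: "(\<Sum>i'\<in>UNIV. \<bar>Gbeta_hess_factor \<beta> mu i i' Y\<bar>) \<le> 4"
proof -
  have "(\<Sum>i'\<in>UNIV. \<bar>Gbeta_hess_factor \<beta> mu i i' Y\<bar>)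
      \<le> (\<Sum>i'\<in>UNIV. of_bool (i = i') + 2 * (of_bool (fst i = fst i') * row_softmax \<beta> mu i' Y)
                       + Gbeta_grad \<beta> mu i' Y)"
    by (intro sum_mono)
      (auto simp: Gbeta_hess_factor_def abs_le_iff row_softmax_pos[THEN less_imp_le] Gbeta_grad_pos[THEN less_imp_le])
  also have "\<dots> = 4"
    by (simp add: sum.distrib sum_distrib_left[symmetric] sum_same_row_softmax sum_Gbeta_grad)
  finally show ?thesis .
qed

lemma sum_abs_Gbeta_hess_le:
  assumes "0 \<le> \<beta>"
  shows "(\<Sum>i'\<in>UNIV. \<bar>Gbeta_hess \<beta> mu i i' Y\<bar>) \<le> 4 * \<beta> * Gbeta_grad \<beta> mu i Y"
proof -
  have "(\<Sum>i'\<in>UNIV. \<bar>Gbeta_hess \<beta> mu i i' Y\<bar>)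
      = \<beta> * Gbeta_grad \<beta> mu i Y * (\<Sum>i'\<in>UNIV. \<bar>Gbeta_hess_factor \<beta> mu i i' Y\<bar>)"
    using assms Gbeta_grad_pos[of \<beta> mu i Y]
    by (simp add: Gbeta_hess_def abs_mult sum_distrib_left)
  also have "\<dots> \<le> 4 * \<beta> * Gbeta_grad \<beta> mu i Y"
    using assms Gbeta_grad_pos[of \<beta> mu i Y]
      mult_left_mono[OF sum_abs_Gbeta_hess_factor_le, of "\<beta> * Gbeta_grad \<beta> mu i Y"]
    by (simp add: mult_ac)
  finally show ?thesis .
qed

lemma sum_abs_row_softmax_deriv_le:
  assumes "0 \<le> \<beta>"
  shows "(\<Sum>i'\<in>UNIV. \<bar>row_softmax_deriv \<beta> mu i i' Y\<bar>) \<le> 2 * \<beta> * row_softmax \<beta> mu i Y"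
proof -
  have "(\<Sum>i'\<in>UNIV. \<bar>row_softmax_deriv \<beta> mu i i' Y\<bar>)
      \<le> (\<Sum>i'\<in>UNIV. \<beta> * row_softmax \<beta> mu i Y
                         * (of_bool (i = i') + of_bool (fst i = fst i') * row_softmax \<beta> mu i' Y))"
  proof (intro sum_mono)
    fix i'
    have "\<bar>of_bool (i = i') - of_bool (fst i = fst i') * row_softmax \<beta> mu i' Y\<bar>
        \<le> of_bool (i = i') + of_bool (fst i = fst i') * row_softmax \<beta> mu i' Y"
      using row_softmax_pos[of \<beta> mu i' Y] by (auto simp: abs_le_iff)
    then show "\<bar>row_softmax_deriv \<beta> mu i i' Y\<bar>
        \<le> \<beta> * row_softmax \<beta> mu i Y * (of_bool (i = i') + of_bool (fst i = fst i') * row_softmax \<beta> mu i' Y)"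
      using assms row_softmax_pos[of \<beta> mu i Y]
      by (simp add: row_softmax_deriv_def abs_mult mult_left_mono)
  qed
  also have "\<dots> = 2 * \<beta> * row_softmax \<beta> mu i Y"
    by (simp add: sum_distrib_left[symmetric] sum.distrib sum_same_row_softmax)
  finally show ?thesis .
qed

lemma sum_same_row_abs_row_softmax_deriv_le:
  assumes "0 \<le> \<beta>"
  shows "(\<Sum>i'\<in>UNIV. of_bool (fst i = fst i') * (\<Sum>i''\<in>UNIV. \<bar>row_softmax_deriv \<beta> mu i' i'' Y\<bar>))
         \<le> 2 * \<beta>"
proof -
  have "(\<Sum>i'\<in>UNIV. of_bool (fst i = fst i') * (\<Sum>i''\<in>UNIV. \<bar>row_softmax_deriv \<beta> mu i' i'' Y\<bar>))
      \<le> (\<Sum>i'\<in>UNIV. of_bool (fst i = fst i') * (2 * \<beta> * row_softmax \<beta> mu i' Y))"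
    by (intro sum_mono mult_left_mono sum_abs_row_softmax_deriv_le[OF assms]) simp
  also have "\<dots> = 2 * \<beta>"
    using sum_same_row_softmax[of i \<beta> mu Y] by (simp add: sum_distrib_left[symmetric] mult_ac)
  finally show ?thesis .
qed

lemma sum_abs_Gbeta_d3_le:
  assumes "0 \<le> \<beta>"
  shows "(\<Sum>i'\<in>UNIV. \<Sum>i''\<in>UNIV. \<bar>Gbeta_d3 \<beta> mu i i' i'' Y\<bar>) \<le> 24 * \<beta>\<^sup>2 * Gbeta_grad \<beta> mu i Y"
proof -
  let ?w = "\<lambda>i. Gbeta_grad \<beta> mu i Y" and ?C = "\<lambda>i i'. \<bar>Gbeta_hess_factor \<beta> mu i i' Y\<bar>"
    and ?H = "\<lambda>i i'. \<bar>Gbeta_hess \<beta> mu i i' Y\<bar>" and ?P = "\<lambda>i i'. \<bar>row_softmax_deriv \<beta> mu i i' Y\<bar>"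
    and ?same_row = "\<lambda>i i'. of_bool (fst i = fst i') :: real"
  have w_nonneg: "0 \<le> ?w i" for i by (rule Gbeta_grad_pos[THEN less_imp_le])
  have C_sum: "(\<Sum>i'\<in>UNIV. ?C i i') \<le> 4" by (rule sum_abs_Gbeta_hess_factor_le)
  have H_sum: "(\<Sum>i''\<in>UNIV. ?H i i'') \<le> 4 * \<beta> * ?w i" by (rule sum_abs_Gbeta_hess_le[OF assms])
  have H_sum_sum: "(\<Sum>i'\<in>UNIV. \<Sum>i''\<in>UNIV. ?H i' i'') \<le> 4 * \<beta>"
    by (rule sum_le_if_le_weights[OF sum_Gbeta_grad sum_abs_Gbeta_hess_le[OF assms]])
  have P_sum: "(\<Sum>i'\<in>UNIV. ?same_row i i' * (\<Sum>i''\<in>UNIV. ?P i' i'')) \<le> 2 * \<beta>"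
    by (rule sum_same_row_abs_row_softmax_deriv_le[OF assms])
  have "(\<Sum>i'\<in>UNIV. \<Sum>i''\<in>UNIV. \<bar>Gbeta_d3 \<beta> mu i i' i'' Y\<bar>)
      \<le> (\<Sum>i'\<in>UNIV. \<Sum>i''\<in>UNIV. \<beta> * (?C i i' * ?H i i'' + ?w i * (?H i' i'' + 2 * (?same_row i i' * ?P i' i''))))"
    using assms w_nonneg[of i]
    by (auto simp: Gbeta_d3_def abs_mult intro!: sum_mono mult_left_mono order.trans[OF abs_triangle_ineq]
        add_mono order.trans[OF abs_triangle_ineq4])
  also have "\<dots> = (\<Sum>i'\<in>UNIV. \<Sum>i''\<in>UNIV. \<beta> * (?C i i' * ?H i i'') + \<beta> * ?w i * ?H i' i''
                                + 2 * \<beta> * ?w i * (?same_row i i' * ?P i' i''))"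
    by (simp add: algebra_simps)
  also have "\<dots> = \<beta> * ((\<Sum>i'\<in>UNIV. ?C i i') * (\<Sum>i''\<in>UNIV. ?H i i''))
      + \<beta> * ?w i * (\<Sum>i'\<in>UNIV. \<Sum>i''\<in>UNIV. ?H i' i'')
      + 2 * \<beta> * ?w i * (\<Sum>i'\<in>UNIV. ?same_row i i' * (\<Sum>i''\<in>UNIV. ?P i' i''))"
    by (simp add: sum.distrib sum_distrib_left[symmetric] sum_distrib_right[symmetric] del: sum_of_bool_mult_eq)
  also have "\<dots> \<le> \<beta> * (4 * (4 * \<beta> * ?w i)) + \<beta> * ?w i * (4 * \<beta>) + 2 * \<beta> * ?w i * (2 * \<beta>)"
    using assms w_nonneg[of i]
    by (intro add_mono mult_left_mono mult_mono C_sum H_sum H_sum_sum P_sum) auto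
  also have "\<dots> = 24 * \<beta>\<^sup>2 * ?w i"
    by (simp add: power2_eq_square algebra_simps)
  finally show ?thesis .
qed

lemma sum_abs_partial_derivs_comp_Gbeta_le:
  fixes \<beta> :: real and mu X :: "real^'p::finite^'n::finite"
  assumes "\<beta> > 0"
    and "\<And>t. (g has_real_derivative g1 t) (at t)"
    and "\<And>t. (g1 has_real_derivative g2 t) (at t)"
    and "\<And>t. (g2 has_real_derivative g3 t) (at t)"
  defines "m \<equiv> \<lambda>Y. g (Gbeta \<beta> mu Y)" and "x \<equiv> Gbeta \<beta> mu X"
  shows "(\<Sum>k\<in>UNIV. \<Sum>j\<in>UNIV. \<bar>pd m k j X\<bar>) = \<bar>g1 x\<bar>"
    and "(\<Sum>k1\<in>UNIV. \<Sum>k2\<in>UNIV. \<Sum>j1\<in>UNIV. \<Sum>j2\<in>UNIV. \<bar>pd (pd m k2 j2) k1 j1 X\<bar>)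
           \<le> \<bar>g2 x\<bar> + 4 * \<beta> * \<bar>g1 x\<bar>"
    and "(\<Sum>k1\<in>UNIV. \<Sum>k2\<in>UNIV. \<Sum>k3\<in>UNIV. \<Sum>j1\<in>UNIV. \<Sum>j2\<in>UNIV. \<Sum>j3\<in>UNIV.
             \<bar>pd (pd (pd m k3 j3) k2 j2) k1 j1 X\<bar>)
           \<le> \<bar>g3 x\<bar> + 16 * \<beta> * \<bar>g2 x\<bar> + 24 * \<beta>\<^sup>2 * \<bar>g1 x\<bar>"
proof -
  let ?w = "\<lambda>i. Gbeta_grad \<beta> mu i X"
  have "0 \<le> \<beta>" "\<beta> \<noteq> 0" using assms(1) by simp_all
  note pd_m = partial_derivs_of_composition[OF assms(2-4) has_partial_deriv_Gbeta[OF \<open>\<beta> \<noteq> 0\<close>, of mu]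
      has_partial_deriv_Gbeta_grad has_partial_deriv_Gbeta_hess, folded m_def]
  note w_nonneg = Gbeta_grad_pos[THEN less_imp_le] and w_sum = sum_Gbeta_grad
  have "(\<Sum>k\<in>UNIV. \<Sum>j\<in>UNIV. \<bar>pd m k j X\<bar>) = \<bar>g1 x\<bar> * (\<Sum>i\<in>UNIV. ?w i)"
    by (simp add: x_def pd_m sum_UNIV_pair[of ?w] abs_mult w_nonneg sum_distrib_left)
  then show "(\<Sum>k\<in>UNIV. \<Sum>j\<in>UNIV. \<bar>pd m k j X\<bar>) = \<bar>g1 x\<bar>"
    by (simp add: w_sum)
  show "(\<Sum>k1\<in>UNIV. \<Sum>k2\<in>UNIV. \<Sum>j1\<in>UNIV. \<Sum>j2\<in>UNIV. \<bar>pd (pd m k2 j2) k1 j1 X\<bar>)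
      \<le> \<bar>g2 x\<bar> + 4 * \<beta> * \<bar>g1 x\<bar>"
    unfolding sum_regroup_pairs2 pd_m(2) prod.collapse x_def using \<open>0 \<le> \<beta>\<close>
    by (intro sum_abs_second_order_chain_le[OF w_nonneg w_sum sum_abs_Gbeta_hess_le])
  have "(\<Sum>k1\<in>UNIV. \<Sum>k2\<in>UNIV. \<Sum>k3\<in>UNIV. \<Sum>j1\<in>UNIV. \<Sum>j2\<in>UNIV. \<Sum>j3\<in>UNIV.
             \<bar>pd (pd (pd m k3 j3) k2 j2) k1 j1 X\<bar>)
      \<le> \<bar>g3 x\<bar> + 3 * (4 * \<beta>) * \<bar>g2 x\<bar> + 24 * \<beta>\<^sup>2 * \<bar>g1 x\<bar>" (is "?S3 \<le> _")
    unfolding sum_regroup_pairs3 pd_m(3) prod.collapse x_def using \<open>0 \<le> \<beta>\<close>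
    by (intro sum_abs_third_order_chain_le[OF w_nonneg w_sum sum_abs_Gbeta_hess_le sum_abs_Gbeta_d3_le])
  also have "\<dots> \<le> \<bar>g3 x\<bar> + 16 * \<beta> * \<bar>g2 x\<bar> + 24 * \<beta>\<^sup>2 * \<bar>g1 x\<bar>"
    using \<open>0 \<le> \<beta>\<close> by (simp add: mult_right_mono)
  finally show "?S3 \<le> \<bar>g3 x\<bar> + 16 * \<beta> * \<bar>g2 x\<bar> + 24 * \<beta>\<^sup>2 * \<bar>g1 x\<bar>" .
qed

section \<open>Sup norms\<close>

lemma abs_le_supnorm: "ereal \<bar>h t\<bar> \<le> supnorm h"
  unfolding supnorm_def by (rule SUP_upper) simp

lemma scaled_abs_le_supnorm: "0 \<le> c \<Longrightarrow> ereal (c * \<bar>h t\<bar>) \<le> ereal c * supnorm h"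
  by (simp add: ereal_mult_left_mono abs_le_supnorm flip: times_ereal.simps(1))

lemma ereal_le_supnorm_add_scaled:
  assumes "x \<le> \<bar>h t\<bar> + c * \<bar>h' t\<bar>" and "0 \<le> c"
  shows "ereal x \<le> supnorm h + ereal c * supnorm h'"
proof -
  have "ereal x \<le> ereal \<bar>h t\<bar> + ereal (c * \<bar>h' t\<bar>)"
    using assms(1) by simp
  also have "\<dots> \<le> supnorm h + ereal c * supnorm h'"
    using assms(2) by (intro add_mono abs_le_supnorm scaled_abs_le_supnorm)
  finally show ?thesis .
qed

lemma ereal_le_supnorm_add_scaled2:
  assumes "x \<le> \<bar>h t\<bar> + c * \<bar>h' t\<bar> + c' * \<bar>h'' t\<bar>" and "0 \<le> c" and "0 \<le> c'"
  shows "ereal x \<le> supnorm h + ereal c * supnorm h' + ereal c' * supnorm h''"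
proof -
  have "ereal x \<le> ereal \<bar>h t\<bar> + ereal (c * \<bar>h' t\<bar>) + ereal (c' * \<bar>h'' t\<bar>)"
    using assms(1) by simp
  also have "\<dots> \<le> supnorm h + ereal c * supnorm h' + ereal c' * supnorm h''"
    using assms(2,3) by (intro add_mono abs_le_supnorm scaled_abs_le_supnorm)
  finally show ?thesis .
qed

theorem lemmaF3:
  fixes \<beta> :: real and mu X :: "real^'p::finite^'n::finite"
    and g g1 g2 g3 :: "real \<Rightarrow> real"
  assumes "\<beta> > 0"
    and "\<And>t. (g has_real_derivative g1 t) (at t)"
    and "\<And>t. (g1 has_real_derivative g2 t) (at t)"
    and "\<And>t. (g2 has_real_derivative g3 t) (at t)"
    and "continuous_on UNIV g3"
  defines "m \<equiv> (\<lambda>Y. g (Gbeta \<beta> mu Y))"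
  shows "ereal (\<Sum>k\<in>UNIV. \<Sum>j\<in>UNIV. \<bar>pd m k j X\<bar>) \<le> supnorm g1
    \<and> ereal (\<Sum>k1\<in>UNIV. \<Sum>k2\<in>UNIV. \<Sum>j1\<in>UNIV. \<Sum>j2\<in>UNIV.
             \<bar>pd (pd m k2 j2) k1 j1 X\<bar>)
         \<le> supnorm g2 + ereal (4 * \<beta>) * supnorm g1
    \<and> ereal (\<Sum>k1\<in>UNIV. \<Sum>k2\<in>UNIV. \<Sum>k3\<in>UNIV. \<Sum>j1\<in>UNIV. \<Sum>j2\<in>UNIV. \<Sum>j3\<in>UNIV.
             \<bar>pd (pd (pd m k3 j3) k2 j2) k1 j1 X\<bar>)
         \<le> supnorm g3 + ereal (16 * \<beta>) * supnorm g2 + ereal (24 * \<beta>^2) * supnorm g1"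
proof -
  note bounds = sum_abs_partial_derivs_comp_Gbeta_le[OF assms(1-4), of mu X, folded m_def]
  show ?thesis
    using assms(1) bounds(1) abs_le_supnorm
      ereal_le_supnorm_add_scaled[where h = g2 and h' = g1, OF bounds(2)]
      ereal_le_supnorm_add_scaled2[where h = g3 and h' = g2 and h'' = g1, OF bounds(3)]
    by simp
qed

end
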